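(* Let $\lambda\in B^{(k,r)}$ and let $\lambda'$ be an enlargement of $\lambda$. Then $\lambda'$ is intertwined with $\lambda$.
   Context: Let $P=\mathbb Z^n$. For $\lambda\in P$, $\rho(\lambda)$ is the unique permutation of $(\frac{n-1}2,\dots,-\frac{n-1}2)$ with $\rho(\lambda)_i>\rho(\lambda)_j$ iff $\lambda_i>\lambda_j$ or ($\lambda_i=\lambda_j$, $i<j$); let $(i_1,\dots,i_n)$ be the indices with $\rho(\lambda)_{i_a}=\frac{n+1}2-a$. $\omega\lambda=(\lambda_2,\dots,\lambda_n,\lambda_1+1)$; $s_i\lambda$ swaps $\lambda_i,\lambda_{i+1}$. Fix $1\le k\le n-1$, $r\ge2$, $g=\gcd(k+1,r-1)$, $\tau=e^{2\pi\sqrt{-1}/(r-1)}$, specialization $(\ast)$: $t=u^{(r-1)/g}$, $q=\tau u^{-(k+1)/g}$. $u_\lambda(f)=f(t^{-\rho(\lambda)_1}q^{-\lambda_1},\dots,t^{-\rho(\lambda)_n}q^{-\lambda_n})$. "Intertwined" is the equivalence relation on $P$ generated by $\lambda\sim\omega\lambda$ and by $\lambda\sim s_i\lambda$ whenever $s_i\lambda\ne\lambda$ and, at $(\ast)$, $u_\lambda(x_i/x_{i+1})\notin\{1,t,t^{-1}\}$. For $a\ge2,b\ge1$, $(i,j)$ is a neighborhood of type $(a,b)$ in $\lambda$ if $\rho(\lambda)_i-\rho(\lambda)_j=a-1$ and either $\lambda_i-\lambda_j\le b-1$, or $\lambda_i-\lambda_j=b$ and $j<i$. $B^{(k,r)}$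 is the set of $\lambda\in P$ having no neighborhood of type $(k+1,r-1)$. An enlargement of $\lambda$ is $\lambda'\in P$ with $\rho(\lambda')=\rho(\lambda)$ and $\lambda'_{i_a}-\lambda'_{i_{a+1}}>\max\{[\frac n{k+1}](r-1),\lambda_{i_a}-\lambda_{i_{a+1}}\}$ for all $1\le a\le n-1$. *)

theory Defs
  imports Complex_Main "HOL-Library.Multiset"
begin

text \<open>Elements of P = Z^n are integer lists of length n; positions are 0-based
  (paper index i corresponds to list position i-1).\<close>

definition rho_values :: "nat \<Rightarrow> rat list" where
  "rho_values n = map (\<lambda>a. (of_nat n + 1) / 2 - of_nat a) [1..<n+1]"

definition rho :: "int list \<Rightarrow> rat list" where
  "rho l = (THE p. mset p = mset (rho_values (length l)) \<and>
      (\<forall>i<length l. \<forall>j<length l. p ! i > p ! j \<longleftrightarrow> (l ! i > l ! j \<or> (l ! i = l ! j \<and> i < j))))"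

definition idx :: "int list \<Rightarrow> nat \<Rightarrow> nat" where
  "idx l a = (THE i. i < length l \<and> rho l ! i = (of_nat (length l) + 1) / 2 - of_nat a)"

definition omega :: "int list \<Rightarrow> int list" where
  "omega l = tl l @ [hd l + 1]"

text \<open>swap l i = s_{i+1} lambda (swaps positions i and i+1, 0-based).\<close>
definition swap :: "int list \<Rightarrow> nat \<Rightarrow> int list" where
  "swap l i = l[i := l ! (i+1), i+1 := l ! i]"

text \<open>Specialization: t = u^((r-1)/g), q = tau * u^(-(k+1)/g), u an indeterminate.
  A (generalized) monomial c * u^e is represented as the pair (c, e).\<close>

definition gg :: "nat \<Rightarrow> nat \<Rightarrow> nat" where
  "gg k r = gcd (k+1) (r-1)"

definition tau :: "nat \<Rightarrow> complex" where
  "tau r = cis (2 * pi / real (r - 1))"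

definition mono_div :: "complex \<times> rat \<Rightarrow> complex \<times> rat \<Rightarrow> complex \<times> rat" where
  "mono_div x y = (fst x / fst y, snd x - snd y)"

definition t_mono :: "nat \<Rightarrow> nat \<Rightarrow> complex \<times> rat" where
  "t_mono k r = (1, of_nat (r - 1) / of_nat (gg k r))"

definition t_inv_mono :: "nat \<Rightarrow> nat \<Rightarrow> complex \<times> rat" where
  "t_inv_mono k r = (1, - of_nat (r - 1) / of_nat (gg k r))"

text \<open>The value t^(-rho(lambda)_i) q^(-lambda_i) of the variable x_i under u_lambda at (*):
  coefficient tau^(-lambda_i), exponent of u equal to
  -rho_i (r-1)/g + lambda_i (k+1)/g.\<close>
definition xval :: "nat \<Rightarrow> nat \<Rightarrow> int list \<Rightarrow> nat \<Rightarrow> complex \<times> rat" where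
  "xval k r l i = (tau r powi (- (l ! i)),
     (- (rho l ! i) * of_nat (r - 1) + of_int (l ! i) * of_nat (k + 1)) / of_nat (gg k r))"

definition u_ratio :: "nat \<Rightarrow> nat \<Rightarrow> int list \<Rightarrow> nat \<Rightarrow> complex \<times> rat" where
  "u_ratio k r l i = mono_div (xval k r l i) (xval k r l (i+1))"

definition inter_step :: "nat \<Rightarrow> nat \<Rightarrow> int list \<Rightarrow> int list \<Rightarrow> bool" where
  "inter_step k r l m \<longleftrightarrow> m = omega l \<or>
     (\<exists>i. i + 1 < length l \<and> m = swap l i \<and> m \<noteq> l \<and>
          u_ratio k r l i \<notin> {(1, 0), t_mono k r, t_inv_mono k r})"

definition intertwined :: "nat \<Rightarrow> nat \<Rightarrow> int list \<Rightarrow> int list \<Rightarrow> bool" where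
  "intertwined k r = (\<lambda>x y. inter_step k r x y \<or> inter_step k r y x)\<^sup>*\<^sup>*"

definition neighborhood :: "nat \<Rightarrow> nat \<Rightarrow> int list \<Rightarrow> nat \<Rightarrow> nat \<Rightarrow> bool" where
  "neighborhood a b l i j \<longleftrightarrow> i < length l \<and> j < length l \<and>
     rho l ! i - rho l ! j = of_nat a - 1 \<and>
     (l ! i - l ! j \<le> int b - 1 \<or> (l ! i - l ! j = int b \<and> j < i))"

definition in_B :: "nat \<Rightarrow> nat \<Rightarrow> int list \<Rightarrow> bool" where
  "in_B k r l \<longleftrightarrow> \<not> (\<exists>i j. neighborhood (k+1) (r-1) l i j)"

definition enlargement :: "nat \<Rightarrow> nat \<Rightarrow> int list \<Rightarrow> int list \<Rightarrow> bool" where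
  "enlargement k r l l' \<longleftrightarrow> length l' = length l \<and> rho l' = rho l \<and>
     (\<forall>a. 1 \<le> a \<and> a \<le> length l - 1 \<longrightarrow>
        l' ! idx l a - l' ! idx l (a+1) >
          max (int (length l div (k+1)) * (int r - 1)) (l ! idx l a - l ! idx l (a+1)))"

end

theory Submission
  imports Defs
begin

text \<open>Write \<open>\<rho>(\<lambda>)\<^sub>i = rank\<^sub>i - (n - 1)/2\<close>, where \<open>rank\<^sub>i\<close> counts the positions below \<open>i\<close> in
  the tie-broken order defining \<open>\<rho>\<close>. At the specialization the ratio \<open>u\<^sub>\<lambda>(x\<^sub>i / x\<^sub>i\<^sub>+\<^sub>1)\<close> equals
  \<open>\<tau>^(-D) u^((D(k + 1) - e(r - 1))/g)\<close>, where \<open>D\<close> is the value gap and \<open>e\<close> the rank gap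
  of the two entries, so swapping two distinct adjacent entries is an intertwining step
  unless \<open>r - 1\<close> divides \<open>D\<close> and \<open>D(k + 1)/(r - 1)\<close> is within one of \<open>e\<close>. If \<open>\<lambda>\<close> has no
  neighbourhood of type \<open>(k + 1, r - 1)\<close>, a rank gap of at least \<open>mk\<close> forces a value gap of
  at least \<open>m(r - 1)\<close>, with equality only in the order prescribed by the tie rule, and this
  excludes such resonances for all swaps used below.

  Consequently, raising one entry by one without changing any rank is an intertwining: swap
  the entry to the front, apply \<open>\<omega>\<close>, which moves it to the back and adds one, and swap it
  back into place. An enlargement differs from \<open>\<lambda>\<close> by an increment that is weakly
  increasing along the rank order of \<open>\<lambda>\<close>. After adding a constant (\<open>\<omega>\<^sup>n\<close> adds one to
  every entry) the increment is nonnegative, and it is removed one unit at a time, always at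
  the lowest rank where it is still positive; every intermediate list has the ranks of
  \<open>\<lambda>\<close> and inherits its gap condition.\<close>

section \<open>Ranks\<close>

text \<open>\<open>below l z i\<close> holds iff \<open>\<rho>(l)\<^sub>z < \<rho>(l)\<^sub>i\<close>, see \<open>rho_eq_rank\<close>.\<close>

definition below :: "int list \<Rightarrow> nat \<Rightarrow> nat \<Rightarrow> bool" where
  "below l z i \<longleftrightarrow> l!z < l!i \<or> (l!i = l!z \<and> i < z)"

definition rank :: "int list \<Rightarrow> nat \<Rightarrow> nat" where
  "rank l i = card {z. z < length l \<and> below l z i}"

lemma below_trans: "below l a b \<Longrightarrow> below l b c \<Longrightarrow> below l a c"
  unfolding below_def by auto

lemma below_irrefl: "\<not> below l a a"
  unfolding below_def by auto

lemma below_asym: "below l a b \<Longrightarrow> \<not> below l b a"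
  unfolding below_def by auto

lemma below_total: "a \<noteq> b \<Longrightarrow> below l a b \<or> below l b a"
  unfolding below_def by auto

lemma rank_less:
  assumes "below l j i" and "j < length l"
  shows "rank l j < rank l i"
proof -
  have "{z. z < length l \<and> below l z j} \<subset> {z. z < length l \<and> below l z i}"
    using assms below_trans below_irrefl by blast
  then show ?thesis
    unfolding rank_def by (intro psubset_card_mono) auto
qed

lemma rank_less_iff:
  assumes "i < length l" and "j < length l"
  shows "rank l j < rank l i \<longleftrightarrow> below l j i"
  using rank_less[of l j i] rank_less[of l i j] below_total[of i j l] assms
  by (metis less_asym)

lemma rank_le_iff:
  assumes "i < length l" and "j < length l"
  shows "rank l j \<le> rank l i \<longleftrightarrow> j = i \<or> below l j i"
  using rank_less_iff[of i l j] rank_less_iff[of j l i] assms below_total below_asym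
  by (metis not_le)

lemma inj_on_rank: "inj_on (rank l) {0..<length l}"
  by (rule inj_onI) (metis atLeastLessThan_iff below_total less_irrefl rank_less)

lemma rank_less_length:
  assumes "i < length l"
  shows "rank l i < length l"
proof -
  have "rank l i \<le> card ({0..<length l} - {i})"
    unfolding rank_def by (intro card_mono) (auto simp: below_irrefl)
  then show ?thesis
    using assms by simp
qed

lemma rank_image: "rank l ` {0..<length l} = {0..<length l}"
  by (rule endo_inj_surj) (auto simp: inj_on_rank rank_less_length)

lemma rank_surj:
  assumes "s < length l"
  obtains x where "x < length l" and "rank l x = s"
proof -
  have "s \<in> rank l ` {0..<length l}"
    using assms rank_image by simp
  then show ?thesis
    using that by auto
qed

lemma card_less_eq_imp_eq:
  fixes x y :: "'a::linorder"
  assumes "finite S" "x \<in> S" "y \<in> S" and "card {v \<in> S. v < x} = card {v \<in> S. v < y}"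
  shows "x = y"
proof -
  have mono: "card {v \<in> S. v < a} < card {v \<in> S. v < b}" if "a < b" "a \<in> S" for a b
    using that assms(1) by (intro psubset_card_mono) auto
  show ?thesis
    using mono[of x y] mono[of y x] assms(2-4) by (cases x y rule: linorder_cases) simp_all
qed

lemma card_nth_less_eq:
  assumes "distinct zs"
  shows "card {j. j < length zs \<and> zs!j < a} = card {v \<in> set zs. v < a}"
proof -
  have "{v \<in> set zs. v < a} = nth zs ` {j. j < length zs \<and> zs!j < a}"
    by (auto simp: in_set_conv_nth)
  also have "card \<dots> = card {j. j < length zs \<and> zs!j < a}"
    using inj_on_nth[OF assms] by (intro card_image) auto
  finally show ?thesis
    by simp
qed

lemma distinct_same_order_imp_eq:
  fixes xs ys :: "'a::linorder list"
  assumes ms: "mset xs = mset ys" and dist: "distinct xs"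
    and order: "\<And>i j. i < length xs \<Longrightarrow> j < length xs \<Longrightarrow> xs!j < xs!i \<longleftrightarrow> ys!j < ys!i"
  shows "xs = ys"
proof (rule nth_equalityI)
  show len: "length xs = length ys"
    using mset_eq_length[OF ms] .
  have dist': "distinct ys"
    using ms dist mset_eq_imp_distinct_iff by blast
  have set: "set ys = set xs"
    using mset_eq_setD[OF ms] by (rule sym)
  fix i assume i: "i < length xs"
  have "card {v \<in> set xs. v < xs!i} = card {j. j < length xs \<and> xs!j < xs!i}"
    using card_nth_less_eq[OF dist] by (rule sym)
  also have "{j. j < length xs \<and> xs!j < xs!i} = {j. j < length ys \<and> ys!j < ys!i}"
    using order[OF i] len by auto
  also have "card \<dots> = card {v \<in> set xs. v < ys!i}"
    using card_nth_less_eq[OF dist'] unfolding set .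
  finally have "card {v \<in> set xs. v < xs!i} = card {v \<in> set xs. v < ys!i}" .
  moreover have "xs!i \<in> set xs" and "ys!i \<in> set xs"
    using i len set nth_mem by metis+
  ultimately show "xs!i = ys!i"
    using card_less_eq_imp_eq by blast
qed

lemma rho_values_eq: "rho_values n = rev (map (\<lambda>c. of_nat c - (of_nat n - 1) / 2) [0..<n])"
proof (rule nth_equalityI)
  show "length (rho_values n) = length (rev (map (\<lambda>c. of_nat c - (of_nat n - 1) / 2) [0..<n]))"
    by (simp add: rho_values_def del: upt_Suc)
next
  fix a assume "a < length (rho_values n)"
  then have a: "a < n"
    by (simp add: rho_values_def del: upt_Suc)
  then have "of_nat (n - Suc a) = (of_nat n - of_nat a - 1 :: rat)"
    by simp
  then show "rho_values n ! a = rev (map (\<lambda>c. of_nat c - (of_nat n - 1) / 2) [0..<n]) ! a"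
    using a by (simp add: rho_values_def rev_nth field_simps del: upt_Suc)
qed

lemma rho_eq_rank: "rho l = map (\<lambda>i. of_nat (rank l i) - (of_nat (length l) - 1) / 2) [0..<length l]"
proof -
  define f :: "nat \<Rightarrow> rat" where "f = (\<lambda>c. of_nat c - (of_nat (length l) - 1) / 2)"
  define p where "p = map (f \<circ> rank l) [0..<length l]"
  have len: "length p = length l"
    by (simp add: p_def)
  have "mset (map (rank l) [0..<length l]) = mset [0..<length l]"
    using inj_on_rank[of l] rank_image[of l] by (simp add: image_mset_mset_set)
  then have "mset p = mset (map f [0..<length l])"
    unfolding p_def by (simp flip: map_map)
  then have ms: "mset p = mset (rho_values (length l))"
    unfolding rho_values_eq f_def by simp
  have order: "p!j < p!i \<longleftrightarrow> below l j i" if "i < length l" "j < length l" for i j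
    using that rank_less_iff by (simp add: p_def f_def)
  have "distinct p"
    using inj_on_rank[of l] by (simp add: p_def distinct_map inj_on_def f_def)
  have "rho l = p"
    unfolding rho_def
  proof (rule the_equality)
    show "mset p = mset (rho_values (length l)) \<and> (\<forall>i<length l. \<forall>j<length l.
        p!j < p!i \<longleftrightarrow> l!j < l!i \<or> (l!i = l!j \<and> i < j))"
      using ms order unfolding below_def by simp
  next
    fix q assume q: "mset q = mset (rho_values (length l)) \<and> (\<forall>i<length l. \<forall>j<length l.
        q!j < q!i \<longleftrightarrow> l!j < l!i \<or> (l!i = l!j \<and> i < j))"
    have "p!j < p!i \<longleftrightarrow> q!j < q!i" if "i < length p" "j < length p" for i j
      using that q order[of i j] len unfolding below_def by simp
    then show "q = p"
      using q ms \<open>distinct p\<close> by (intro distinct_same_order_imp_eq[symmetric]) simp_all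
  qed
  then show ?thesis
    by (simp add: p_def f_def)
qed

lemma rho_nth: "i < length l \<Longrightarrow> rho l ! i = of_nat (rank l i) - (of_nat (length l) - 1) / 2"
  by (simp add: rho_eq_rank)

section \<open>Intertwining steps\<close>

lemma intertwined_eq_equivclp: "intertwined k r = equivclp (inter_step k r)"
  by (simp add: intertwined_def equivclp_def symclp_def [abs_def])

lemma intertwined_refl [simp]: "intertwined k r l l"
  by (simp add: intertwined_eq_equivclp)

lemma intertwined_sym [sym]: "intertwined k r l m \<Longrightarrow> intertwined k r m l"
  unfolding intertwined_eq_equivclp by (rule equivclp_sym)

lemma intertwined_trans [trans]:
  "intertwined k r l m \<Longrightarrow> intertwined k r m m' \<Longrightarrow> intertwined k r l m'"
  unfolding intertwined_eq_equivclp by (rule equivclp_trans)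

lemma inter_step_imp_intertwined: "inter_step k r l m \<Longrightarrow> intertwined k r l m"
  unfolding intertwined_eq_equivclp by (rule r_into_equivclp)

lemma intertwined_omega: "intertwined k r l (omega l)"
  by (rule inter_step_imp_intertwined) (simp add: inter_step_def)

text \<open>For entries with value gap \<open>D\<close> and rank gap \<open>e\<close>, the ratio \<open>u_ratio\<close> is
  \<open>\<tau>^(-D) u^((D(k + 1) - e(r - 1))/g)\<close>; it can lie in \<open>{1, t, t\<inverse>}\<close> only for resonant gaps.\<close>

definition resonant :: "nat \<Rightarrow> nat \<Rightarrow> int \<Rightarrow> int \<Rightarrow> bool" where
  "resonant k r D e \<longleftrightarrow> int (r - 1) dvd D \<and> \<bar>D div int (r - 1) * int (k + 1) - e\<bar> \<le> 1"

lemma resonant_uminus: "resonant k r (- D) (- e) \<longleftrightarrow> resonant k r D e"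
  unfolding resonant_def by (auto simp: dvd_neg_div abs_minus_commute)

lemma tau_power_int_eq_1_imp_dvd:
  assumes r: "2 \<le> r" and "tau r powi a = 1"
  shows "int (r - 1) dvd a"
proof -
  define R where "R = real (r - 1)"
  have "R > 0"
    using r by (simp add: R_def)
  have "cos (of_int a * (2 * pi / R)) = 1"
    using assms(2) unfolding tau_def cis_power_int R_def by (metis cis.sel(1) one_complex.sel(1))
  then obtain m :: int where "of_int a * (2 * pi / R) = of_int m * 2 * pi"
    using cos_one_2pi_int by blast
  then have "real_of_int a = of_int m * R"
    using \<open>R > 0\<close> by (simp add: field_simps)
  then have "a = m * int (r - 1)"
    unfolding R_def by (metis of_int_eq_iff of_int_mult of_int_of_nat_eq)
  then show ?thesis
    by simp
qed

lemma fst_u_ratio: "fst (u_ratio k r l i) = tau r powi (l!(i+1) - l!i)"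
proof -
  have "tau r \<noteq> 0"
    by (simp add: tau_def)
  have "fst (u_ratio k r l i) = tau r powi (- l!i) / tau r powi (- l!(i+1))"
    unfolding u_ratio_def mono_div_def xval_def by (simp only: fst_conv)
  also have "\<dots> = tau r powi (- l!i - - l!(i+1))"
    using \<open>tau r \<noteq> 0\<close> by (intro power_int_diff[symmetric]) simp
  finally show ?thesis
    by (simp add: algebra_simps)
qed

lemma snd_u_ratio:
  assumes "i + 1 < length l"
  shows "snd (u_ratio k r l i) = (of_int ((l!i - l!(i+1)) * int (k + 1)
      - (int (rank l i) - int (rank l (i+1))) * int (r - 1))) / of_nat (gg k r)"
  using assms by (simp add: u_ratio_def mono_div_def xval_def rho_nth diff_divide_distrib[symmetric] algebra_simps)

lemma special_u_ratio_imp_resonant: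
  assumes r: "2 \<le> r" and i: "i + 1 < length l"
    and special: "u_ratio k r l i \<in> {(1, 0), t_mono k r, t_inv_mono k r}"
  shows "resonant k r (l!i - l!(i+1)) (int (rank l i) - int (rank l (i+1)))"
proof -
  define D e where "D = l!i - l!(i+1)" and "e = int (rank l i) - int (rank l (i+1))"
  have "tau r powi (- D) = 1"
    using special fst_u_ratio[of k r l i] by (auto simp: t_mono_def t_inv_mono_def D_def)
  then obtain m where m: "D = int (r - 1) * m"
    using tau_power_int_eq_1_imp_dvd[OF r] by (metis dvd_minus_iff dvdE)
  define X where "X = D * int (k + 1) - e * int (r - 1)"
  have snd: "snd (u_ratio k r l i) = of_int X / of_nat (gg k r)"
    unfolding X_def D_def e_def by (rule snd_u_ratio[OF i])
  have "gg k r > 0"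
    by (simp add: gg_def)
  then have "of_int X = snd (u_ratio k r l i) * of_nat (gg k r)"
    unfolding snd by simp
  also have "\<dots> \<in> {0, of_nat (r - 1), - of_nat (r - 1)}"
    using special \<open>gg k r > 0\<close> by (auto simp: t_mono_def t_inv_mono_def)
  finally have "of_int X \<in> {of_int 0, of_int (int (r - 1)), of_int (- int (r - 1)) :: rat}"
    by simp
  then have "X \<in> {0, int (r - 1), - int (r - 1)}"
    by (simp only: insert_iff of_int_eq_iff empty_iff)
  then have "int (r - 1) * (m * int (k + 1) - e) \<in> {int (r - 1) * 0, int (r - 1) * 1, int (r - 1) * (- 1)}"
    unfolding X_def m by (simp add: algebra_simps)
  then have "\<bar>m * int (k + 1) - e\<bar> \<le> 1"
    using r by (auto simp only: mult_cancel_left insert_iff)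
  then show ?thesis
    using r unfolding resonant_def D_def[symmetric] e_def[symmetric] m by simp
qed

lemma inter_step_swapI:
  assumes "2 \<le> r" and "i + 1 < length l" and "l!i \<noteq> l!(i+1)"
    and "\<not> resonant k r (l!i - l!(i+1)) (int (rank l i) - int (rank l (i+1)))"
  shows "inter_step k r l (swap l i)"
proof -
  have "swap l i \<noteq> l"
    using assms(2,3) by (metis length_list_update nth_list_update_eq swap_def)
  then show ?thesis
    using assms special_u_ratio_imp_resonant unfolding inter_step_def by blast
qed

section \<open>Lists without neighbourhoods of type \<open>(k + 1, r - 1)\<close>\<close>

definition rank_gapped :: "nat \<Rightarrow> nat \<Rightarrow> int list \<Rightarrow> bool" where
  "rank_gapped k r l \<longleftrightarrow> (\<forall>x y. x < length l \<longrightarrow> y < length l \<longrightarrow> rank l x = rank l y + k \<longrightarrow>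
     int (r - 1) \<le> l!x - l!y \<and> (l!x - l!y = int (r - 1) \<longrightarrow> x \<le> y))"

lemma in_B_imp_rank_gapped:
  assumes "in_B k r l"
  shows "rank_gapped k r l"
  unfolding rank_gapped_def
proof (intro allI impI)
  fix x y assume x: "x < length l" and y: "y < length l" and xy: "rank l x = rank l y + k"
  then have "rho l ! x - rho l ! y = of_nat (k + 1) - 1"
    by (simp add: rho_nth)
  moreover have "\<not> neighborhood (k + 1) (r - 1) l x y"
    using assms unfolding in_B_def by blast
  ultimately show "int (r - 1) \<le> l!x - l!y \<and> (l!x - l!y = int (r - 1) \<longrightarrow> x \<le> y)"
    using x y unfolding neighborhood_def by auto
qed

lemma rank_gapped_chain:
  assumes gapped: "rank_gapped k r l" and x: "x < length l" and y: "y < length l"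
    and "rank l y + m * k \<le> rank l x"
  shows "int m * int (r - 1) \<le> l!x - l!y \<and> (l!x - l!y = int m * int (r - 1) \<longrightarrow> x \<le> y)"
  using x assms(4)
proof (induction m arbitrary: x)
  case 0
  then show ?case
    using rank_le_iff[of x l y] y unfolding below_def by auto
next
  case (Suc m)
  have "rank l x - k < length l"
    using rank_less_length[OF Suc.prems(1)] by simp
  then obtain z where z: "z < length l" and "rank l z = rank l x - k"
    by (rule rank_surj)
  then have xz: "rank l x = rank l z + k"
    using Suc.prems(2) by simp
  have "int (r - 1) \<le> l!x - l!z" and "l!x - l!z = int (r - 1) \<longrightarrow> x \<le> z"
    using gapped Suc.prems(1) z xz unfolding rank_gapped_def by blast+
  moreover have "int m * int (r - 1) \<le> l!z - l!y" and "l!z - l!y = int m * int (r - 1) \<longrightarrow> z \<le> y"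
    using Suc.IH[OF z] Suc.prems(2) xz by auto
  ultimately show ?case
    by (auto simp: algebra_simps)
qed

lemma rank_gapped_resonant:
  assumes r: "2 \<le> r" and gapped: "rank_gapped k r l" and x: "x < length l" and y: "y < length l"
    and D: "0 < D" and res: "resonant k r D (int (rank l x) - int (rank l y))"
  shows "D \<le> l!x - l!y \<and> (l!x - l!y = D \<longrightarrow> x \<le> y)"
proof -
  obtain m where m: "D = int (r - 1) * m"
    using res unfolding resonant_def by blast
  have "0 < m"
    using D m r by (simp add: zero_less_mult_iff)
  moreover have "\<bar>m * int (k + 1) - (int (rank l x) - int (rank l y))\<bar> \<le> 1"
    using res m r unfolding resonant_def by simp
  ultimately have "int (rank l y + nat m * k) \<le> int (rank l x)"
    by (simp add: algebra_simps abs_le_iff)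
  then have "rank l y + nat m * k \<le> rank l x"
    by (simp only: of_nat_le_iff)
  moreover have "D = int (nat m) * int (r - 1)"
    using m \<open>0 < m\<close> by simp
  ultimately show ?thesis
    using rank_gapped_chain[OF gapped x y, of "nat m"] by simp
qed

section \<open>Moving one entry\<close>

lemma rank_reindex:
  assumes len: "length m = length l" and bij: "bij_betw s {0..<length l} {0..<length l}"
    and val: "\<And>z. z < length l \<Longrightarrow> m!z = l!(s z)"
    and ties: "\<And>a b. a < length l \<Longrightarrow> b < length l \<Longrightarrow> l!(s a) = l!(s b) \<Longrightarrow> a < b \<longleftrightarrow> s a < s b"
    and z: "z < length l"
  shows "rank m z = rank l (s z)"
proof -
  let ?I = "{0..<length l}"
  have "below m w z \<longleftrightarrow> below l (s w) (s z)" if "w < length l" for w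
    using val[OF that] val[OF z] ties[OF z that] unfolding below_def by auto
  then have "rank m z = card {w \<in> ?I. below l (s w) (s z)}"
    unfolding rank_def using len by (intro arg_cong[where f = card]) auto
  also have "\<dots> = card (s ` {w \<in> ?I. below l (s w) (s z)})"
    by (rule card_image[symmetric], rule inj_on_subset[OF bij_betw_imp_inj_on[OF bij]]) auto
  also have "\<dots> = card {u \<in> s ` ?I. below l u (s z)}"
    by (intro arg_cong[where f = card]) blast
  also have "\<dots> = rank l (s z)"
    unfolding rank_def bij_betw_imp_surj_on[OF bij] by (intro arg_cong[where f = card]) auto
  finally show ?thesis .
qed

definition move_perm :: "nat \<Rightarrow> nat \<Rightarrow> nat \<Rightarrow> nat" where
  "move_perm p j z = (if z = j then p
     else if j \<le> p then (if j < z \<and> z \<le> p then z - 1 else z)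
     else (if p \<le> z \<and> z < j then z + 1 else z))"

text \<open>\<open>move_entry l p j\<close> takes the entry at position \<open>p\<close> out of \<open>l\<close> and reinserts it at
  position \<open>j\<close>; it passes the entries at the positions \<open>w\<close> with \<open>crossed p j w\<close>.\<close>

definition move_entry :: "int list \<Rightarrow> nat \<Rightarrow> nat \<Rightarrow> int list" where
  "move_entry l p j = map (\<lambda>z. l ! move_perm p j z) [0..<length l]"

lemma length_move_entry [simp]: "length (move_entry l p j) = length l"
  by (simp add: move_entry_def)

lemma nth_move_entry: "z < length l \<Longrightarrow> move_entry l p j ! z = l ! move_perm p j z"
  by (simp add: move_entry_def)

lemma move_entry_same: "move_entry l p p = l"
  by (rule nth_equalityI) (auto simp: nth_move_entry move_perm_def)

lemma bij_betw_move_perm: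
  assumes "p < n" and "j < n"
  shows "bij_betw (move_perm p j) {0..<n} {0..<n}"
proof -
  have "inj_on (move_perm p j) {0..<n}"
    unfolding inj_on_def move_perm_def by (auto split: if_splits)
  moreover have "move_perm p j ` {0..<n} \<subseteq> {0..<n}"
    using assms unfolding move_perm_def by auto
  ultimately show ?thesis
    by (simp add: bij_betw_def endo_inj_surj)
qed

definition crossed :: "nat \<Rightarrow> nat \<Rightarrow> nat \<Rightarrow> bool" where
  "crossed p j w \<longleftrightarrow> j \<le> w \<and> w < p \<or> p < w \<and> w \<le> j"

lemma move_perm_crossed: "crossed j p w \<Longrightarrow> crossed p j (move_perm p j w)"
  unfolding crossed_def move_perm_def by auto

lemma move_perm_mono:
  assumes "a < b" and "\<not> (a = j \<and> crossed j p b)" and "\<not> (b = j \<and> crossed j p a)"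
  shows "move_perm p j a < move_perm p j b"
  using assms unfolding crossed_def move_perm_def by (cases "j \<le> p") auto

lemma move_perm_less_iff:
  assumes "\<not> (a = j \<and> crossed j p b)" and "\<not> (b = j \<and> crossed j p a)"
  shows "a < b \<longleftrightarrow> move_perm p j a < move_perm p j b"
  using move_perm_mono[of a b j p] move_perm_mono[of b a j p] assms
  by (cases a b rule: linorder_cases) auto

lemma rank_move_entry:
  assumes p: "p < length l" and j: "j < length l" and z: "z < length l"
    and ties: "\<And>w. crossed p j w \<Longrightarrow> l!w \<noteq> l!p"
  shows "rank (move_entry l p j) z = rank l (move_perm p j z)"
proof (rule rank_reindex)
  show "bij_betw (move_perm p j) {0..<length l} {0..<length l}"
    using p j by (rule bij_betw_move_perm)
  have "move_perm p j j = p"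
    by (simp add: move_perm_def)
  then show "a < b \<longleftrightarrow> move_perm p j a < move_perm p j b"
    if "l ! move_perm p j a = l ! move_perm p j b" for a b
    using that ties move_perm_crossed by (intro move_perm_less_iff) metis+
qed (use z in \<open>simp_all add: nth_move_entry\<close>)

lemma swap_move_entry_down:
  assumes "j < p" and "p < length l"
  shows "swap (move_entry l p (j+1)) j = move_entry l p j"
  by (rule nth_equalityI) (use assms in \<open>auto simp: swap_def nth_list_update nth_move_entry move_perm_def\<close>)

lemma swap_move_entry_up:
  assumes "p \<le> j" and "j + 1 < length l"
  shows "swap (move_entry l p j) j = move_entry l p (j+1)"
  by (rule nth_equalityI) (use assms in \<open>auto simp: swap_def nth_list_update nth_move_entry move_perm_def\<close>)

lemma omega_move_entry:
  assumes p: "p < length l"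
  shows "omega (move_entry l p 0) = move_entry (l[p := l!p + 1]) p (length l - 1)"
proof (rule nth_equalityI)
  have "move_entry l p 0 \<noteq> []"
    using p by (metis length_move_entry list.size(3) not_less0)
  moreover have "move_entry l p 0 ! 0 = l!p"
    using p by (subst nth_move_entry) (auto simp: move_perm_def)
  ultimately show "omega (move_entry l p 0) ! z = move_entry (l[p := l!p + 1]) p (length l - 1) ! z"
    if "z < length (omega (move_entry l p 0))" for z
    using that p by (cases "z = length l - 1")
      (auto simp: omega_def nth_append hd_conv_nth nth_tl nth_move_entry move_perm_def nth_list_update)
qed (use p in \<open>simp add: omega_def\<close>)

lemma intertwined_move_down:
  assumes r: "2 \<le> r" and jp: "j \<le> p" and p: "p < length l"
    and free: "\<And>w. j \<le> w \<Longrightarrow> w < p \<Longrightarrow>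
      l!w \<noteq> l!p \<and> \<not> resonant k r (l!w - l!p) (int (rank l w) - int (rank l p))"
  shows "intertwined k r l (move_entry l p j)"
  using jp
proof (induction j rule: inc_induct)
  case base
  then show ?case
    by (simp add: move_entry_same)
next
  case (step i)
  define C where "C = move_entry l p (i + 1)"
  have i: "i < length l" "i + 1 < length l"
    using step.hyps p by auto
  have ties: "l!w \<noteq> l!p" if "crossed p (i + 1) w" for w
    using free that step.hyps unfolding crossed_def by fastforce
  have "move_perm p (i + 1) i = i" and "move_perm p (i + 1) (i + 1) = p"
    using step.hyps by (auto simp: move_perm_def)
  then have C: "C!i = l!i" "C!(i+1) = l!p" "rank C i = rank l i" "rank C (i+1) = rank l p"
    unfolding C_def using nth_move_entry[OF i(1)] nth_move_entry[OF i(2)]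
      rank_move_entry[OF p i(2) i(1) ties] rank_move_entry[OF p i(2) i(2) ties] by simp_all
  have "inter_step k r C (swap C i)"
    using free[of i] step.hyps i C by (intro inter_step_swapI[OF r]) (simp_all add: C_def)
  then have "intertwined k r C (swap C i)"
    by (rule inter_step_imp_intertwined)
  moreover have "swap C i = move_entry l p i"
    unfolding C_def using step.hyps p by (intro swap_move_entry_down) auto
  ultimately have "intertwined k r C (move_entry l p i)"
    by simp
  with step.IH show ?case
    unfolding C_def by (simp add: intertwined_trans)
qed

lemma intertwined_move_up:
  assumes r: "2 \<le> r" and pj: "p \<le> j" and j: "j < length l"
    and free: "\<And>w. p < w \<Longrightarrow> w \<le> j \<Longrightarrow>
      l!w \<noteq> l!p \<and> \<not> resonant k r (l!p - l!w) (int (rank l p) - int (rank l w))"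
  shows "intertwined k r l (move_entry l p j)"
  using pj j
proof (induction j rule: dec_induct)
  case base
  then show ?case
    by (simp add: move_entry_same)
next
  case (step i)
  define C where "C = move_entry l p i"
  have i: "i < length l" "i + 1 < length l" and p: "p < length l"
    using step.hyps step.prems by auto
  have ties: "l!w \<noteq> l!p" if "crossed p i w" for w
    using free that step.hyps unfolding crossed_def by auto
  have "move_perm p i i = p" and "move_perm p i (i + 1) = i + 1"
    using step.hyps by (auto simp: move_perm_def)
  then have C: "C!i = l!p" "C!(i+1) = l!(i+1)" "rank C i = rank l p" "rank C (i+1) = rank l (i+1)"
    unfolding C_def using nth_move_entry[OF i(1)] nth_move_entry[OF i(2)]
      rank_move_entry[OF p i(1) i(1) ties] rank_move_entry[OF p i(1) i(2) ties] by simp_all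
  have "inter_step k r C (swap C i)"
    using free[of "i + 1"] step.hyps i C by (intro inter_step_swapI[OF r]) (simp_all add: C_def)
  then have "intertwined k r C (swap C i)"
    by (rule inter_step_imp_intertwined)
  moreover have "swap C i = move_entry l p (i + 1)"
    unfolding C_def using step.hyps i by (intro swap_move_entry_up) auto
  ultimately have "intertwined k r C (move_entry l p (i + 1))"
    by simp
  with step.IH step.prems show ?case
    unfolding C_def by (simp add: intertwined_trans)
qed

section \<open>Raising one entry\<close>

definition rank_preserving_raise :: "int list \<Rightarrow> nat \<Rightarrow> int list \<Rightarrow> bool" where
  "rank_preserving_raise l p l' \<longleftrightarrow> p < length l \<and> l' = l[p := l!p + 1] \<and>
     (\<forall>i<length l. rank l' i = rank l i)"

lemma rank_preserving_raiseD:
  assumes "rank_preserving_raise l p l'"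
  shows "p < length l" and "length l' = length l" and "l'!w = (if w = p then l!p + 1 else l!w)"
    and "i < length l \<Longrightarrow> rank l' i = rank l i"
  using assms unfolding rank_preserving_raise_def by auto

lemma raise_free_left:
  assumes r: "2 \<le> r" and gapped: "rank_gapped k r l" and gapped': "rank_gapped k r l'"
    and raise: "rank_preserving_raise l p l'" and w: "w < p"
  shows "l!w \<noteq> l!p \<and> \<not> resonant k r (l!w - l!p) (int (rank l w) - int (rank l p))"
proof
  note raise = rank_preserving_raiseD[OF raise]
  have wn: "w < length l"
    using w raise(1) by simp
  show "l!w \<noteq> l!p"
  proof
    assume "l!w = l!p"
    then have "below l p w" and "below l' w p"
      using w raise(3) unfolding below_def by auto
    then show False
      using rank_less_iff[of w l p] rank_less_iff[of p l' w] raise wn by auto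
  qed
  show "\<not> resonant k r (l!w - l!p) (int (rank l w) - int (rank l p))"
  proof
    assume res: "resonant k r (l!w - l!p) (int (rank l w) - int (rank l p))"
    show False
    proof (cases "l!p < l!w")
      case True
      have "l!w - l!p \<le> l'!w - l'!p"
        using rank_gapped_resonant[OF r gapped', of w p] True res wn raise by auto
      then show False
        using w raise(3) by auto
    next
      case False
      then have "l!w < l!p"
        using \<open>l!w \<noteq> l!p\<close> by simp
      moreover have "resonant k r (l!p - l!w) (int (rank l p) - int (rank l w))"
        using res resonant_uminus by (metis minus_diff_eq)
      ultimately have "p \<le> w"
        using rank_gapped_resonant[OF r gapped raise(1) wn, of "l!p - l!w"] by auto
      then show False
        using w by simp
    qed
  qed
qed

lemma raise_free_right:
  assumes r: "2 \<le> r" and gapped: "rank_gapped k r l" and gapped': "rank_gapped k r l'"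
    and raise: "rank_preserving_raise l p l'" and w: "p < w" "w < length l"
  shows "l'!w \<noteq> l'!p \<and> \<not> resonant k r (l'!p - l'!w) (int (rank l' p) - int (rank l' w))"
proof
  note raise = rank_preserving_raiseD[OF raise]
  show "l'!w \<noteq> l'!p"
  proof
    assume "l'!w = l'!p"
    then have "below l p w" and "below l' w p"
      using w raise(3) unfolding below_def by auto
    then show False
      using rank_less_iff[of w l p] rank_less_iff[of p l' w] raise w by auto
  qed
  show "\<not> resonant k r (l'!p - l'!w) (int (rank l' p) - int (rank l' w))"
  proof
    assume res: "resonant k r (l'!p - l'!w) (int (rank l' p) - int (rank l' w))"
    show False
    proof (cases "l'!w < l'!p")
      case True
      have "l'!p - l'!w \<le> l!p - l!w"
        using rank_gapped_resonant[OF r gapped, of p w] True res w raise by auto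
      then show False
        using w raise(3) by auto
    next
      case False
      then have "l'!p < l'!w"
        using \<open>l'!w \<noteq> l'!p\<close> by simp
      moreover have "resonant k r (l'!w - l'!p) (int (rank l' w) - int (rank l' p))"
        using res resonant_uminus by (metis minus_diff_eq)
      ultimately have "w \<le> p"
        using rank_gapped_resonant[OF r gapped', of w p "l'!w - l'!p"] w raise by auto
      then show False
        using w by simp
    qed
  qed
qed

text \<open>Move the raised entry to the front by swaps, let \<open>omega\<close> carry it to the back while
  adding one, and swap it back into place.\<close>

lemma intertwined_rank_preserving_raise:
  assumes r: "2 \<le> r" and gapped: "rank_gapped k r l" and gapped': "rank_gapped k r l'"
    and raise: "rank_preserving_raise l p l'"
  shows "intertwined k r l l'"
proof -
  have p: "p < length l" and l': "l' = l[p := l!p + 1]"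
    using raise unfolding rank_preserving_raise_def by auto
  have "intertwined k r l (move_entry l p 0)"
    using raise_free_left[OF r gapped gapped' raise] by (intro intertwined_move_down[OF r _ p]) auto
  also have "intertwined k r \<dots> (omega (move_entry l p 0))"
    by (rule intertwined_omega)
  also have "omega (move_entry l p 0) = move_entry l' p (length l' - 1)"
    using omega_move_entry[OF p] l' by simp
  also have "intertwined k r \<dots> l'"
    using raise_free_right[OF r gapped gapped' raise] p l'
    by (intro intertwined_sym[OF intertwined_move_up[OF r]]) auto
  finally show ?thesis .
qed

section \<open>Monotone increments\<close>

definition rank_mono_increment :: "int list \<Rightarrow> int list \<Rightarrow> bool" where
  "rank_mono_increment l m \<longleftrightarrow> length m = length l \<and>
     (\<forall>x y. x < length l \<longrightarrow> y < length l \<longrightarrow> rank l y \<le> rank l x \<longrightarrow> m!y - l!y \<le> m!x - l!x)"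

lemma rank_mono_increment_below_iff:
  assumes m: "rank_mono_increment l m" and z: "z < length l" and i: "i < length l"
  shows "below m z i \<longleftrightarrow> below l z i"
proof -
  have "below m a b" if "a < length l" "b < length l" "below l a b" for a b
  proof -
    have "m!a - l!a \<le> m!b - l!b"
      using m that rank_less[of l a b] unfolding rank_mono_increment_def by auto
    then show ?thesis
      using that(3) unfolding below_def by auto
  qed
  then show ?thesis
    using z i below_total[of z i l] below_asym below_irrefl by metis
qed

lemma rank_mono_increment_rank:
  assumes m: "rank_mono_increment l m" and i: "i < length l"
  shows "rank m i = rank l i"
proof -
  have "length m = length l"
    using m unfolding rank_mono_increment_def by simp
  then show ?thesis
    unfolding rank_def using rank_mono_increment_below_iff[OF m _ i]
    by (intro arg_cong[where f = card]) auto
qed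

lemma rank_mono_increment_rank_gapped:
  assumes gapped: "rank_gapped k r l" and m: "rank_mono_increment l m"
  shows "rank_gapped k r m"
  unfolding rank_gapped_def
proof (intro allI impI)
  fix x y assume x: "x < length m" and y: "y < length m" and xy: "rank m x = rank m y + k"
  have len: "length m = length l"
    using m unfolding rank_mono_increment_def by simp
  then have xy': "rank l x = rank l y + k"
    using xy x y rank_mono_increment_rank[OF m] by simp
  then have "int (r - 1) \<le> l!x - l!y \<and> (l!x - l!y = int (r - 1) \<longrightarrow> x \<le> y)"
    using gapped x y len unfolding rank_gapped_def by simp
  moreover have "m!y - l!y \<le> m!x - l!x"
    using m x y len xy' unfolding rank_mono_increment_def by simp
  ultimately show "int (r - 1) \<le> m!x - m!y \<and> (m!x - m!y = int (r - 1) \<longrightarrow> x \<le> y)"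
    by auto
qed

lemma rank_mono_increment_add_const:
  "rank_mono_increment l m \<Longrightarrow> rank_mono_increment l (map (\<lambda>v. v + c) m)"
  unfolding rank_mono_increment_def by auto

lemma rank_mono_increment_lower:
  assumes m: "rank_mono_increment l m" and p: "p < length l" and "l!p < m!p"
    and least: "\<And>y. y < length l \<Longrightarrow> l!y < m!y \<Longrightarrow> rank l p \<le> rank l y"
  shows "rank_mono_increment l (m[p := m!p - 1])"
  unfolding rank_mono_increment_def
proof (intro conjI allI impI)
  have len: "length m = length l"
    using m unfolding rank_mono_increment_def by simp
  then show "length (m[p := m!p - 1]) = length l"
    by simp
  fix x y assume x: "x < length l" and y: "y < length l" and xy: "rank l y \<le> rank l x"
  have mono: "m!y - l!y \<le> m!x - l!x"
    using m x y xy unfolding rank_mono_increment_def by simp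
  show "m[p := m!p - 1] ! y - l!y \<le> m[p := m!p - 1] ! x - l!x"
  proof (cases "x = p \<and> y \<noteq> p")
    case True
    then have "rank l y \<noteq> rank l p"
      using x y inj_onD[OF inj_on_rank[of l], of y p] by auto
    then have "rank l y < rank l p"
      using xy True by simp
    then have "m!y \<le> l!y"
      using least[OF y] by fastforce
    then show ?thesis
      using True \<open>l!p < m!p\<close> p len by simp
  next
    case False
    then show ?thesis
      using mono p len by (auto simp: nth_list_update)
  qed
qed

lemma intertwined_rank_mono_increment_nonneg:
  assumes r: "2 \<le> r" and gapped: "rank_gapped k r l"
    and "rank_mono_increment l m" and "\<forall>x<length l. l!x \<le> m!x"
  shows "intertwined k r l m"
  using assms(3,4)
proof (induction "\<Sum>x<length l. nat (m!x - l!x)" arbitrary: m rule: less_induct)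
  case less
  have len: "length m = length l"
    using less.prems(1) unfolding rank_mono_increment_def by simp
  show ?case
  proof (cases "m = l")
    case True
    then show ?thesis
      by simp
  next
    case False
    then obtain x0 where "x0 < length l" "l!x0 < m!x0"
      using len less.prems(2) nth_equalityI[of m l] by fastforce
    then obtain p where p: "p < length l" "l!p < m!p"
      and least: "\<And>y. y < length l \<Longrightarrow> l!y < m!y \<Longrightarrow> rank l p \<le> rank l y"
      using ex_has_least_nat[of "\<lambda>x. x < length l \<and> l!x < m!x" x0 "rank l"] by blast
    define m' where "m' = m[p := m!p - 1]"
    have m': "rank_mono_increment l m'"
      unfolding m'_def using rank_mono_increment_lower[OF less.prems(1) p least] .
    have "nat (m'!x - l!x) \<le> nat (m!x - l!x)" for x
      using p len by (cases "x = p") (auto simp: m'_def intro!: nat_mono)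
    moreover have "nat (m'!p - l!p) < nat (m!p - l!p)"
      using p len by (simp add: m'_def)
    ultimately have "(\<Sum>x<length l. nat (m'!x - l!x)) < (\<Sum>x<length l. nat (m!x - l!x))"
      using p by (intro sum_strict_mono_ex1) auto
    moreover have "\<forall>x<length l. l!x \<le> m'!x"
      using less.prems(2) p len by (auto simp: m'_def nth_list_update)
    ultimately have "intertwined k r l m'"
      using less.hyps m' by blast
    also have "intertwined k r m' m"
    proof (rule intertwined_rank_preserving_raise[OF r])
      show "rank_gapped k r m'" and "rank_gapped k r m"
        using rank_mono_increment_rank_gapped[OF gapped] m' less.prems(1) by blast+
      show "rank_preserving_raise m' p m"
        unfolding rank_preserving_raise_def
        using p len rank_mono_increment_rank[OF m'] rank_mono_increment_rank[OF less.prems(1)]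
        by (auto simp: m'_def)
    qed
    finally show ?thesis .
  qed
qed

lemma funpow_omega: "j \<le> length l \<Longrightarrow> (omega ^^ j) l = drop j l @ map (\<lambda>v. v + 1) (take j l)"
proof (induction j)
  case (Suc j)
  then have "drop j l = l!j # drop (Suc j) l" and "take (Suc j) l = take j l @ [l!j]"
    by (simp_all add: Cons_nth_drop_Suc take_Suc_conv_app_nth)
  with Suc show ?case
    by (simp add: omega_def)
qed simp

lemma intertwined_add_const: "intertwined k r l (map (\<lambda>v. v + int c) l)"
proof (induction c)
  case (Suc c)
  let ?l = "map (\<lambda>v. v + int c) l"
  have "intertwined k r ?l ((omega ^^ j) ?l)" for j
    by (induction j) (auto intro: intertwined_trans intertwined_omega)
  moreover have "(omega ^^ length ?l) ?l = map (\<lambda>v. v + int (Suc c)) l"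
    by (simp add: funpow_omega algebra_simps)
  ultimately show ?case
    using Suc.IH by (metis intertwined_trans)
qed simp

theorem intertwined_rank_mono_increment:
  assumes r: "2 \<le> r" and B: "in_B k r l" and m: "rank_mono_increment l m"
  shows "intertwined k r l m"
proof -
  define c where "c = (\<Sum>x<length l. nat (l!x - m!x))"
  have "l!x - m!x \<le> int c" if "x < length l" for x
  proof -
    have "nat (l!x - m!x) \<le> c"
      unfolding c_def by (rule member_le_sum) (use that in auto)
    then show ?thesis
      by simp
  qed
  then have "\<forall>x<length l. l!x \<le> map (\<lambda>v. v + int c) m ! x"
    using m unfolding rank_mono_increment_def by force
  then have "intertwined k r l (map (\<lambda>v. v + int c) m)"
    using intertwined_rank_mono_increment_nonneg[OF r in_B_imp_rank_gapped[OF B]]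
      rank_mono_increment_add_const[OF m] by blast
  also have "intertwined k r \<dots> m"
    by (rule intertwined_sym, rule intertwined_add_const)
  finally show ?thesis .
qed

section \<open>Enlargements\<close>

lemma idx_eq:
  assumes x: "x < length l" and a: "rank l x + a = length l"
  shows "idx l a = x"
  unfolding idx_def
proof (rule the_equality)
  have "(of_nat (rank l x) :: rat) = of_nat (length l) - of_nat a"
    using a by (simp add: algebra_simps flip: of_nat_add)
  then show "x < length l \<and> rho l ! x = (of_nat (length l) + 1) / 2 - of_nat a"
    using x by (simp add: rho_nth field_simps)
  fix i assume "i < length l \<and> rho l ! i = (of_nat (length l) + 1) / 2 - of_nat a"
  then have "i < length l" and "(of_nat (rank l i) :: rat) = of_nat (rank l x)"
    using \<open>(of_nat (rank l x) :: rat) = _\<close> by (auto simp: rho_nth field_simps)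
  then show "i = x"
    using inj_on_rank[of l] x unfolding inj_on_def by auto
qed

lemma rank_mono_if_consecutive:
  fixes f :: "nat \<Rightarrow> 'a::preorder"
  assumes step: "\<And>x y. x < length l \<Longrightarrow> y < length l \<Longrightarrow> rank l x = Suc (rank l y) \<Longrightarrow> f y \<le> f x"
    and x: "x < length l" and y: "y < length l" and xy: "rank l y \<le> rank l x"
  shows "f y \<le> f x"
proof -
  have "f y \<le> f z" if "z < length l" and "rank l z = rank l y + d" for d z
    using that
  proof (induction d arbitrary: z)
    case 0
    then show ?case
      using inj_onD[OF inj_on_rank[of l], of z y] y by simp
  next
    case (Suc d)
    have "rank l y + d < length l"
      using rank_less_length[OF Suc.prems(1)] Suc.prems(2) by simp
    then obtain z' where z': "z' < length l" "rank l z' = rank l y + d"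
      by (rule rank_surj)
    have "f y \<le> f z'"
      using Suc.IH[OF z'] .
    also have "f z' \<le> f z"
      using step[OF Suc.prems(1) z'(1)] z' Suc.prems(2) by simp
    finally show ?case .
  qed
  then show ?thesis
    using x xy by (metis le_add_diff_inverse)
qed

lemma enlargement_rank_mono_increment:
  assumes "enlargement k r l l'"
  shows "rank_mono_increment l l'"
  unfolding rank_mono_increment_def
proof (intro conjI allI impI)
  show "length l' = length l"
    using assms unfolding enlargement_def by simp
  have consecutive: "l'!y - l!y \<le> l'!x - l!x"
    if x: "x < length l" and y: "y < length l" and xy: "rank l x = Suc (rank l y)" for x y
  proof -
    define a where "a = length l - rank l x"
    have "rank l x < length l"
      using rank_less_length[OF x] .
    then have "idx l a = x" and "idx l (a + 1) = y" and "1 \<le> a" and "a \<le> length l - 1"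
      using idx_eq[OF x] idx_eq[OF y] xy unfolding a_def by auto
    moreover have "l!idx l a - l!idx l (a + 1) < l'!idx l a - l'!idx l (a + 1)"
      using assms \<open>1 \<le> a\<close> \<open>a \<le> length l - 1\<close> unfolding enlargement_def by simp
    ultimately show ?thesis
      by simp
  qed
  show "l'!y - l!y \<le> l'!x - l!x"
    if "x < length l" "y < length l" "rank l y \<le> rank l x" for x y
    using consecutive that by (rule rank_mono_if_consecutive)
qed

theorem lemma4p4:
  fixes n k r :: nat and l l' :: "int list"
  assumes "length l = n" and "1 \<le> k" and "k \<le> n - 1" and "2 \<le> r"
    and "in_B k r l" and "enlargement k r l l'"
  shows "intertwined k r l' l"
  using intertwined_rank_mono_increment[OF assms(4,5) enlargement_rank_mono_increment[OF assms(6)]]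
  by (rule intertwined_sym)

end
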